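(* Let $\mathcal{P}$ be a hereditary property of ordered graphs, and let $k,M \geqslant 0$ be integers. Suppose that for every $G \in \mathcal{P}$, the homogeneous block sequence $t_1\geqslant t_2\geqslant\dots$ of $G$ satisfies $\sum_{i = k+2}^\infty t_i \leqslant M$. Then $|\mathcal{P}_n| = O(n^k)$ as $n\to\infty$.
   Context: Ordered graphs of order $n$ have vertex set $[n]$ with the natural order; a hereditary property is a collection of ordered graphs closed under order-preserving isomorphism and induced ordered subgraphs; $\mathcal{P}_n$ is the set of members with vertex set $[n]$. A homogeneous block of $G$ is a maximal set $B$ of consecutive vertices such that $\Gamma(x)\setminus\{y\}=\Gamma(y)\setminus\{x\}$ for all $x,y\in B$ ($\Gamma$ denoting neighbourhood); these partition $V(G)$ uniquely. The homogeneous block sequence of $G$ is $t_1\geqslant t_2\geqslant\dots$, the orders of the homogeneous blocks of $G$ in non-increasing order, with $t_i=0$ for $i$ larger than the number of blocks. *)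

theory Defs
  imports Main "HOL-Library.Multiset" "HOL-Library.Landau_Symbols"
begin

text \<open>Since two ordered graphs on {1..n} are order-isomorphic iff equal, a property
  is represented by the set of pairs (n, E) of its members on vertex set [n].\<close>

definition ograph :: "nat \<Rightarrow> (nat \<times> nat) set \<Rightarrow> bool" where
  "ograph n E \<longleftrightarrow> E \<subseteq> {1..n} \<times> {1..n} \<and> sym E \<and> (\<forall>x. (x, x) \<notin> E)"

definition induced_sub :: "nat \<Rightarrow> (nat \<Rightarrow> nat) \<Rightarrow> (nat \<times> nat) set \<Rightarrow> (nat \<times> nat) set" where
  "induced_sub m f E = {(i, j). i \<in> {1..m} \<and> j \<in> {1..m} \<and> (f i, f j) \<in> E}"

definition hereditary :: "(nat \<times> (nat \<times> nat) set) set \<Rightarrow> bool" where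
  "hereditary P \<longleftrightarrow>
     (\<forall>(n, E) \<in> P. ograph n E) \<and>
     (\<forall>n E m f. (n, E) \<in> P \<longrightarrow> strict_mono_on {1..m} f \<longrightarrow> f ` {1..m} \<subseteq> {1..n}
        \<longrightarrow> (m, induced_sub m f E) \<in> P)"

definition members :: "(nat \<times> (nat \<times> nat) set) set \<Rightarrow> nat \<Rightarrow> (nat \<times> nat) set set" where
  "members P n = {E. (n, E) \<in> P}"

definition nbhd :: "(nat \<times> nat) set \<Rightarrow> nat \<Rightarrow> nat set" where
  "nbhd E x = {y. (x, y) \<in> E}"

definition homog_set :: "nat \<Rightarrow> (nat \<times> nat) set \<Rightarrow> nat set \<Rightarrow> bool" where
  "homog_set n E B \<longleftrightarrow> (\<exists>a b. 1 \<le> a \<and> a \<le> b \<and> b \<le> n \<and> B = {a..b}) \<and>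
     (\<forall>x\<in>B. \<forall>y\<in>B. nbhd E x - {y} = nbhd E y - {x})"

definition homog_blocks :: "nat \<Rightarrow> (nat \<times> nat) set \<Rightarrow> nat set set" where
  "homog_blocks n E = {B. homog_set n E B \<and> (\<forall>B'. homog_set n E B' \<and> B \<subseteq> B' \<longrightarrow> B' = B)}"

text \<open>Homogeneous block sequence t_1 >= t_2 >= ..., as a list (t_i = 0 beyond its length).\<close>
definition block_seq :: "nat \<Rightarrow> (nat \<times> nat) set \<Rightarrow> nat list" where
  "block_seq n E = rev (sorted_list_of_multiset (image_mset card (mset_set (homog_blocks n E))))"

end

theory Submission
  imports Defs
begin

text \<open>Vertices of one homogeneous block are twins, so an ordered graph is determined by
  the set S of least vertices of its blocks together with the quotient graph on S. The
  hypothesis leaves at most L = k + 1 + M blocks, at most k + 1 of them of order greater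
  than M. The gaps between consecutive elements of S and n + 1 form a composition of n into
  at most L parts with at most k + 1 parts exceeding M. Such a composition is determined by
  its truncation at M + 1, for which there are boundedly many choices, together with its
  first k large parts, for which there are at most (n + 1)^k choices: the last large part is
  fixed by the sum.\<close>

section \<open>Compositions with few large parts\<close>

lemma card_lists_length_le_bound:
  assumes "finite A" "A \<noteq> {}"
  shows "card {xs. set xs \<subseteq> A \<and> length xs \<le> k} \<le> (k + 1) * card A ^ k"
proof -
  have "card {xs. set xs \<subseteq> A \<and> length xs \<le> k} = (\<Sum>i\<le>k. card A ^ i)"
    using assms(1) by (rule card_lists_length_le)
  also have "\<dots> \<le> (\<Sum>i\<le>k. card A ^ k)"
    using assms by (intro sum_mono power_increasing) (auto simp: Suc_leI card_gt_0_iff)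
  finally show ?thesis by simp
qed

lemma truncation_determines_small_entries:
  fixes M :: nat
  shows "map (\<lambda>x. min x (Suc M)) xs = map (\<lambda>x. min x (Suc M)) ys \<Longrightarrow>
    filter (\<lambda>x. \<not> M < x) xs = filter (\<lambda>x. \<not> M < x) ys \<and>
    length (filter (\<lambda>x. M < x) xs) = length (filter (\<lambda>x. M < x) ys)"
proof (induction xs arbitrary: ys)
  case (Cons a xs)
  then obtain b ys' where ys: "ys = b # ys'" "min a (Suc M) = min b (Suc M)"
    "map (\<lambda>x. min x (Suc M)) xs = map (\<lambda>x. min x (Suc M)) ys'"
    by (cases ys) auto
  then have "M < a \<longleftrightarrow> M < b" "\<not> M < a \<Longrightarrow> a = b"
    by (auto simp: min_def split: if_splits)
  with Cons.IH[OF ys(3)] show ?case by (simp add: ys(1))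
qed simp

lemma truncation_and_large_entries_determine_list:
  fixes M :: nat
  assumes "map (\<lambda>x. min x (Suc M)) xs = map (\<lambda>x. min x (Suc M)) ys"
    and "filter (\<lambda>x. M < x) xs = filter (\<lambda>x. M < x) ys"
  shows "xs = ys"
  using assms
proof (induction xs arbitrary: ys)
  case (Cons a xs)
  then obtain b ys' where ys: "ys = b # ys'" "min a (Suc M) = min b (Suc M)"
    "map (\<lambda>x. min x (Suc M)) xs = map (\<lambda>x. min x (Suc M)) ys'"
    by (cases ys) auto
  then have "M < a \<longleftrightarrow> M < b" "\<not> M < a \<Longrightarrow> a = b"
    by (auto simp: min_def split: if_splits)
  with Cons.prems(2) Cons.IH[OF ys(3)] show ?case
    by (cases "M < a") (simp_all add: ys(1))
qed simp

lemma butlast_and_sum_list_determine_list: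
  fixes xs ys :: "nat list"
  assumes "butlast xs = butlast ys" "length xs = length ys" "sum_list xs = sum_list ys"
  shows "xs = ys"
proof (cases "xs = []")
  case False
  with assms(2) have "ys \<noteq> []" by auto
  have split: "sum_list zs = sum_list (butlast zs) + last zs" if "zs \<noteq> []" for zs :: "nat list"
    by (subst append_butlast_last_id[OF that, symmetric]) simp
  from assms have "last xs = last ys"
    using split[OF \<open>xs \<noteq> []\<close>] split[OF \<open>ys \<noteq> []\<close>] by simp
  with assms(1) \<open>xs \<noteq> []\<close> \<open>ys \<noteq> []\<close> show ?thesis
    by (metis append_butlast_last_id)
qed (use assms in simp)

lemma sum_list_filter_add_filter_not:
  fixes xs :: "'a::comm_monoid_add list"
  shows "sum_list (filter P xs) + sum_list (filter (\<lambda>x. \<not> P x) xs) = sum_list xs"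
  by (induction xs) (simp_all add: ac_simps)

lemma truncation_butlast_large_and_sum_list_determine_list:
  fixes M :: nat
  assumes trunc: "map (\<lambda>x. min x (Suc M)) xs = map (\<lambda>x. min x (Suc M)) ys"
    and large: "butlast (filter (\<lambda>x. M < x) xs) = butlast (filter (\<lambda>x. M < x) ys)"
    and sum: "sum_list xs = sum_list ys"
  shows "xs = ys"
proof -
  note small = truncation_determines_small_entries[OF trunc]
  have "sum_list (filter (\<lambda>x. M < x) xs) = sum_list (filter (\<lambda>x. M < x) ys)"
    using sum sum_list_filter_add_filter_not[of "\<lambda>x. M < x" xs]
      sum_list_filter_add_filter_not[of "\<lambda>x. M < x" ys] small
    by simp
  with large small have "filter (\<lambda>x. M < x) xs = filter (\<lambda>x. M < x) ys"
    using butlast_and_sum_list_determine_list by blast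
  with trunc show ?thesis
    by (rule truncation_and_large_entries_determine_list)
qed

definition few_large_comps :: "nat \<Rightarrow> nat \<Rightarrow> nat \<Rightarrow> nat \<Rightarrow> nat list set" where
  "few_large_comps L M k n =
     {g. length g \<le> L \<and> sum_list g = n \<and> length (filter (\<lambda>x. M < x) g) \<le> k + 1}"

lemma finite_few_large_comps: "finite (few_large_comps L M k n)"
proof (rule finite_subset)
  show "few_large_comps L M k n \<subseteq> {xs. set xs \<subseteq> {0..n} \<and> length xs \<le> L}"
    by (auto simp: few_large_comps_def dest: member_le_sum_list)
qed (simp add: finite_lists_length_le)

lemma card_few_large_comps:
  "card (few_large_comps L M k n) \<le> ((L + 1) * (M + 2) ^ L) * ((k + 1) * (n + 1) ^ k)"
proof -
  let ?large = "\<lambda>x. M < x"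
  let ?code = "\<lambda>g. (map (\<lambda>x. min x (Suc M)) g, butlast (filter ?large g))"
  let ?A = "{xs. set xs \<subseteq> {0..Suc M} \<and> length xs \<le> L}"
  let ?B = "{xs. set xs \<subseteq> {0..n} \<and> length xs \<le> k}"
  have "inj_on ?code (few_large_comps L M k n)"
    by (rule inj_onI) (auto simp: few_large_comps_def
        intro: truncation_butlast_large_and_sum_list_determine_list)
  moreover have "?code ` few_large_comps L M k n \<subseteq> ?A \<times> ?B"
  proof (rule image_subsetI)
    fix g assume g: "g \<in> few_large_comps L M k n"
    have "set (butlast (filter ?large g)) \<subseteq> set g"
      by (meson filter_is_subset in_set_butlastD subsetI subsetD)
    then have "set (butlast (filter ?large g)) \<subseteq> {0..n}"
      using g member_le_sum_list by (fastforce simp: few_large_comps_def)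
    moreover have "length (butlast (filter ?large g)) \<le> k"
      using g by (auto simp: few_large_comps_def)
    moreover have "set (map (\<lambda>x. min x (Suc M)) g) \<subseteq> {0..Suc M}" "length g \<le> L"
      using g by (auto simp: few_large_comps_def)
    ultimately show "?code g \<in> ?A \<times> ?B" by simp
  qed
  moreover have "finite (?A \<times> ?B)"
    by (intro finite_cartesian_product finite_lists_length_le) simp_all
  ultimately have "card (few_large_comps L M k n) \<le> card (?A \<times> ?B)"
    by (rule card_inj_on_le)
  also have "\<dots> = card ?A * card ?B"
    by (rule card_cartesian_product)
  also have "\<dots> \<le> ((L + 1) * (M + 2) ^ L) * ((k + 1) * (n + 1) ^ k)"
  proof (rule mult_le_mono)
    show "card ?A \<le> (L + 1) * (M + 2) ^ L"
      using card_lists_length_le_bound[of "{0..Suc M}" L] by simp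
    show "card ?B \<le> (k + 1) * (n + 1) ^ k"
      using card_lists_length_le_bound[of "{0..n}" k] by simp
  qed
  finally show ?thesis .
qed

section \<open>Twins and homogeneous blocks\<close>

definition twins :: "(nat \<times> nat) set \<Rightarrow> nat \<Rightarrow> nat \<Rightarrow> bool" where
  "twins E x y \<longleftrightarrow> nbhd E x - {y} = nbhd E y - {x}"

lemma twins_iff:
  assumes "ograph n E"
  shows "twins E x y \<longleftrightarrow> (\<forall>w. w \<noteq> x \<longrightarrow> w \<noteq> y \<longrightarrow> ((x, w) \<in> E \<longleftrightarrow> (y, w) \<in> E))"
  using assms by (auto simp: twins_def nbhd_def ograph_def)

lemma twins_sym: "twins E x y \<Longrightarrow> twins E y x"
  by (simp add: twins_def)

lemma twins_trans:
  assumes G: "ograph n E" and "twins E x y" "twins E y z"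
  shows "twins E x z"
proof -
  have sym: "(a, b) \<in> E \<longleftrightarrow> (b, a) \<in> E" for a b
    using G by (auto simp: ograph_def dest: symD)
  from assms show ?thesis
    unfolding twins_iff[OF G] by (metis sym)
qed

lemma twins_edge:
  assumes G: "ograph n E" and "twins E x x'" "twins E y y'" "x' \<noteq> y'" "(x, y) \<in> E"
  shows "(x', y') \<in> E"
proof -
  have sym: "(a, b) \<in> E \<longleftrightarrow> (b, a) \<in> E" for a b
    using G by (auto simp: ograph_def dest: symD)
  have irrefl: "(a, a) \<notin> E" for a
    using G by (simp add: ograph_def)
  from assms show ?thesis
    unfolding twins_iff[OF G] by (metis sym irrefl)
qed

lemma homog_set_twins: "homog_set n E B \<Longrightarrow> x \<in> B \<Longrightarrow> y \<in> B \<Longrightarrow> twins E x y"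
  by (simp add: homog_set_def twins_def)

lemma homog_set_subset: "homog_set n E B \<Longrightarrow> B \<subseteq> {1..n}"
  by (auto simp: homog_set_def)

lemma homog_set_Un:
  assumes G: "ograph n E" and B1: "homog_set n E B1" and B2: "homog_set n E B2"
    and "B1 \<inter> B2 \<noteq> {}"
  shows "homog_set n E (B1 \<union> B2)"
proof -
  obtain a1 b1 a2 b2 where ab: "1 \<le> a1" "a1 \<le> b1" "b1 \<le> n" "B1 = {a1..b1}"
    "1 \<le> a2" "a2 \<le> b2" "b2 \<le> n" "B2 = {a2..b2}"
    using B1 B2 by (auto simp: homog_set_def)
  obtain z where z: "z \<in> B1" "z \<in> B2" using assms(4) by blast
  with ab have "B1 \<union> B2 = {min a1 a2..max b1 b2}" by auto
  moreover have "twins E x y" if "x \<in> B1 \<union> B2" "y \<in> B1 \<union> B2" for x y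
  proof -
    have "twins E w z" if "w \<in> B1 \<union> B2" for w
      using that z homog_set_twins[OF B1] homog_set_twins[OF B2] by blast
    with G that show ?thesis by (metis twins_sym twins_trans)
  qed
  ultimately show ?thesis
    using ab unfolding homog_set_def twins_def
    by (intro conjI exI[of _ "min a1 a2"] exI[of _ "max b1 b2"]) auto
qed

lemma homog_blocks_eq:
  assumes G: "ograph n E" and "B1 \<in> homog_blocks n E" "B2 \<in> homog_blocks n E" "B1 \<inter> B2 \<noteq> {}"
  shows "B1 = B2"
proof -
  have "homog_set n E (B1 \<union> B2)"
    using assms by (intro homog_set_Un) (auto simp: homog_blocks_def)
  with assms(2,3) have "B1 \<union> B2 = B1" "B1 \<union> B2 = B2"
    by (auto simp: homog_blocks_def)
  then show ?thesis by simp
qed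

lemma homog_block_interval:
  assumes "B \<in> homog_blocks n E"
  obtains a b where "1 \<le> a" "a \<le> b" "b \<le> n" "B = {a..b}"
  using assms by (auto simp: homog_blocks_def homog_set_def)

lemma homog_block_subset: "B \<in> homog_blocks n E \<Longrightarrow> B \<subseteq> {1..n}"
  by (auto simp: homog_blocks_def dest!: homog_set_subset)

lemma finite_homog_blocks: "finite (homog_blocks n E)"
  by (rule finite_subset[of _ "Pow {1..n}"]) (auto dest!: homog_block_subset)

lemma homog_block_twins: "B \<in> homog_blocks n E \<Longrightarrow> x \<in> B \<Longrightarrow> y \<in> B \<Longrightarrow> twins E x y"
  by (auto simp: homog_blocks_def intro: homog_set_twins)

lemma Min_homog_block_in: "B \<in> homog_blocks n E \<Longrightarrow> Min B \<in> B"
  by (erule homog_block_interval) simp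

lemma Min_homog_block_le: "B \<in> homog_blocks n E \<Longrightarrow> x \<in> B \<Longrightarrow> Min B \<le> x"
  by (erule homog_block_interval) simp

lemma exists_homog_block:
  assumes "x \<in> {1..n}"
  obtains B where "B \<in> homog_blocks n E" "x \<in> B"
proof -
  let ?F = "{B. homog_set n E B \<and> x \<in> B}"
  have "finite ?F"
    by (rule finite_subset[of _ "Pow {1..n}"]) (auto dest!: homog_set_subset)
  moreover have "{x..x} \<in> ?F"
    using assms unfolding homog_set_def by (intro CollectI conjI exI[of _ x]) auto
  ultimately obtain B where B: "B \<in> ?F" and "\<And>B'. B' \<in> ?F \<Longrightarrow> B \<subseteq> B' \<Longrightarrow> B' = B"
    using finite_has_maximal[of ?F] by blast
  then have "B \<in> homog_blocks n E"
    by (auto simp: homog_blocks_def)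
  with B that show ?thesis by blast
qed

section \<open>Encoding a graph by its blocks\<close>

definition floor_in :: "nat set \<Rightarrow> nat \<Rightarrow> nat" where
  "floor_in S x = Max {s \<in> S. s \<le> x}"

lemma floor_in_eqI:
  assumes "finite S" "s \<in> S" "s \<le> x" "\<And>t. t \<in> S \<Longrightarrow> t \<le> x \<Longrightarrow> t \<le> s"
  shows "floor_in S x = s"
  unfolding floor_in_def using assms by (intro Max_eqI) auto

lemma floor_in_mem:
  assumes "finite S" "s \<in> S" "s \<le> x"
  shows "floor_in S x \<in> S"
proof -
  have "Max {t \<in> S. t \<le> x} \<in> {t \<in> S. t \<le> x}"
    using assms by (intro Max_in) auto
  then show ?thesis by (simp add: floor_in_def)
qed

definition block_starts :: "nat \<Rightarrow> (nat \<times> nat) set \<Rightarrow> nat set" where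
  "block_starts n E = Min ` homog_blocks n E"

lemma inj_on_Min_homog_blocks:
  assumes "ograph n E"
  shows "inj_on Min (homog_blocks n E)"
proof (rule inj_onI)
  fix B1 B2 assume "B1 \<in> homog_blocks n E" "B2 \<in> homog_blocks n E" "Min B1 = Min B2"
  with assms show "B1 = B2"
    by (metis Min_homog_block_in disjoint_iff homog_blocks_eq)
qed

lemma finite_block_starts: "finite (block_starts n E)"
  by (simp add: block_starts_def finite_homog_blocks)

lemma block_starts_subset: "block_starts n E \<subseteq> {1..n}"
  using Min_homog_block_in homog_block_subset by (fastforce simp: block_starts_def)

lemma one_in_block_starts:
  assumes "1 \<le> n"
  shows "1 \<in> block_starts n E"
proof -
  obtain B where "B \<in> homog_blocks n E" "1 \<in> B"
    using assms by (auto intro: exists_homog_block[of 1 n E])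
  moreover from this have "Min B = 1"
    using Min_homog_block_in Min_homog_block_le homog_block_subset
    by (metis atLeastAtMost_iff le_antisym subsetD)
  ultimately show ?thesis
    unfolding block_starts_def by (metis imageI)
qed

lemma card_block_starts:
  "ograph n E \<Longrightarrow> card (block_starts n E) = card (homog_blocks n E)"
  unfolding block_starts_def by (intro card_image inj_on_Min_homog_blocks)

lemma floor_in_block_starts:
  assumes G: "ograph n E" and B: "B \<in> homog_blocks n E" and "x \<in> B"
  shows "floor_in (block_starts n E) x = Min B"
proof (rule floor_in_eqI)
  show "Min B \<in> block_starts n E" "Min B \<le> x"
    using B \<open>x \<in> B\<close> by (auto simp: block_starts_def Min_homog_block_le)
  fix t assume "t \<in> block_starts n E" "t \<le> x"
  then obtain B' where B': "B' \<in> homog_blocks n E" "t = Min B'"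
    by (auto simp: block_starts_def)
  show "t \<le> Min B"
  proof (rule ccontr)
    assume "\<not> t \<le> Min B"
    with B \<open>t \<le> x\<close> \<open>x \<in> B\<close> have "t \<in> B"
      by (elim homog_block_interval) auto
    with G B B' have "B' = B"
      using Min_homog_block_in homog_blocks_eq by blast
    with B' \<open>\<not> t \<le> Min B\<close> show False by simp
  qed
qed (rule finite_block_starts)

lemma twins_if_floor_in_block_starts_eq:
  assumes G: "ograph n E" and "x \<in> {1..n}" "y \<in> {1..n}"
    and "floor_in (block_starts n E) x = floor_in (block_starts n E) y"
  shows "twins E x y"
proof -
  obtain Bx By where "Bx \<in> homog_blocks n E" "x \<in> Bx" "By \<in> homog_blocks n E" "y \<in> By"
    using assms(2,3) by (metis exists_homog_block)
  moreover from this have "Bx = By"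
    using assms(4) floor_in_block_starts[OF G] inj_on_Min_homog_blocks[OF G]
    by (metis inj_onD)
  ultimately show ?thesis by (metis homog_block_twins)
qed

text \<open>The quotient graph on the blocks, each block represented by its least vertex.\<close>

definition quotient_edges :: "nat \<Rightarrow> (nat \<times> nat) set \<Rightarrow> (nat \<times> nat) set" where
  "quotient_edges n E =
     (\<lambda>(x, y). (floor_in (block_starts n E) x, floor_in (block_starts n E) y)) ` E"

definition lift_edges :: "nat \<Rightarrow> nat set \<Rightarrow> (nat \<times> nat) set \<Rightarrow> (nat \<times> nat) set" where
  "lift_edges n S A =
     {(x, y). x \<in> {1..n} \<and> y \<in> {1..n} \<and> x \<noteq> y \<and> (floor_in S x, floor_in S y) \<in> A}"

lemma lift_quotient_edges:
  assumes G: "ograph n E"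
  shows "lift_edges n (block_starts n E) (quotient_edges n E) = E"
proof (intro equalityI subsetI)
  fix p assume "p \<in> E"
  with G show "p \<in> lift_edges n (block_starts n E) (quotient_edges n E)"
    by (auto simp: lift_edges_def quotient_edges_def ograph_def)
next
  fix p assume "p \<in> lift_edges n (block_starts n E) (quotient_edges n E)"
  then obtain x y x' y' where p: "p = (x, y)" "x \<in> {1..n}" "y \<in> {1..n}" "x \<noteq> y"
    and E: "(x', y') \<in> E"
    and x': "floor_in (block_starts n E) x' = floor_in (block_starts n E) x"
    and y': "floor_in (block_starts n E) y' = floor_in (block_starts n E) y"
    by (auto simp: lift_edges_def quotient_edges_def)
  from G E have "x' \<in> {1..n}" "y' \<in> {1..n}" "x' \<noteq> y'"
    by (auto simp: ograph_def)
  with G p x' y' have "twins E x' x" "twins E y' y"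
    by (auto intro: twins_if_floor_in_block_starts_eq)
  with G E p show "p \<in> E"
    by (auto intro: twins_edge)
qed

lemma quotient_edges_subset:
  assumes G: "ograph n E" and "1 \<le> n"
  shows "quotient_edges n E \<subseteq> block_starts n E \<times> block_starts n E"
proof -
  have "floor_in (block_starts n E) x \<in> block_starts n E" if "x \<in> {1..n}" for x
    using that one_in_block_starts[OF \<open>1 \<le> n\<close>] by (intro floor_in_mem[OF finite_block_starts]) auto
  with G show ?thesis
    by (auto simp: quotient_edges_def ograph_def)
qed

section \<open>Gap sequences of block starts\<close>

fun gaps :: "nat list \<Rightarrow> nat list" where
  "gaps (a # b # xs) = (b - a) # gaps (b # xs)"
| "gaps _ = []"

lemma length_gaps: "length (gaps xs) = length xs - 1"
  by (induction xs rule: gaps.induct) auto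

lemma nth_gaps: "i < length xs - 1 \<Longrightarrow> gaps xs ! i = xs ! Suc i - xs ! i"
  by (induction xs arbitrary: i rule: gaps.induct) (auto simp: nth_Cons split: nat.split)

lemma sum_list_gaps: "sorted xs \<Longrightarrow> xs \<noteq> [] \<Longrightarrow> sum_list (gaps xs) = last xs - hd xs"
proof (induction xs rule: gaps.induct)
  case (1 a b xs)
  then have "a \<le> b" "b \<le> last (b # xs)" by auto
  with 1 show ?case by simp
qed auto

lemma gaps_inject:
  "sorted xs \<Longrightarrow> sorted ys \<Longrightarrow> xs \<noteq> [] \<Longrightarrow> ys \<noteq> [] \<Longrightarrow> hd xs = hd ys \<Longrightarrow>
    gaps xs = gaps ys \<Longrightarrow> xs = ys"
proof (induction xs arbitrary: ys rule: gaps.induct)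
  case (1 a b xs)
  then obtain c ys' where ys: "ys = a # c # ys'"
    by (cases ys rule: gaps.cases) auto
  with "1.prems" have "b - a = c - a" "a \<le> b" "a \<le> c" by auto
  then have "b = c" by simp
  with "1.prems" ys have "b # xs = c # ys'" by (intro "1.IH") auto
  with ys show ?case by simp
next
  case ("2_2" a)
  then show ?case by (cases ys rule: gaps.cases) auto
qed simp

text \<open>The sentinel n + 1 makes the last gap the order of the last block.\<close>

definition boundaries :: "nat set \<Rightarrow> nat \<Rightarrow> nat list" where
  "boundaries S n = sorted_list_of_set S @ [Suc n]"

definition gap_code :: "nat set \<Rightarrow> nat \<Rightarrow> nat list" where
  "gap_code S n = gaps (boundaries S n)"

lemma length_boundaries [simp]: "length (boundaries S n) = Suc (card S)"
  by (simp add: boundaries_def)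

lemma last_boundaries [simp]: "last (boundaries S n) = Suc n"
  by (simp add: boundaries_def)

lemma boundaries_ne: "boundaries S n \<noteq> []"
  by (simp add: boundaries_def)

lemma strict_sorted_boundaries: "S \<subseteq> {1..n} \<Longrightarrow> sorted_wrt (<) (boundaries S n)"
  using finite_subset[of S "{1..n}"] by (auto simp: boundaries_def sorted_wrt_append)

lemma sorted_boundaries: "S \<subseteq> {1..n} \<Longrightarrow> sorted (boundaries S n)"
  by (rule strict_sorted_imp_sorted[OF strict_sorted_boundaries])

lemma hd_boundaries:
  assumes "S \<subseteq> {1..n}" "1 \<in> S"
  shows "hd (boundaries S n) = 1"
proof -
  have "finite S" "S \<noteq> {}" using assms finite_subset by auto
  moreover have "Min S = 1"
    using assms \<open>finite S\<close> by (intro Min_eqI) auto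
  ultimately show ?thesis
    by (simp add: boundaries_def sorted_list_of_set_nonempty)
qed

lemma length_gap_code: "length (gap_code S n) = card S"
  by (simp add: gap_code_def length_gaps)

lemma sum_list_gap_code: "S \<subseteq> {1..n} \<Longrightarrow> 1 \<in> S \<Longrightarrow> sum_list (gap_code S n) = n"
  unfolding gap_code_def
  by (simp add: sum_list_gaps[OF sorted_boundaries boundaries_ne] hd_boundaries)

lemma inj_on_gap_code: "inj_on (\<lambda>S. gap_code S n) {S. S \<subseteq> {1..n} \<and> 1 \<in> S}"
proof (rule inj_onI)
  fix S S' assume "S \<in> {S. S \<subseteq> {1..n} \<and> 1 \<in> S}" "S' \<in> {S. S \<subseteq> {1..n} \<and> 1 \<in> S}"
    and eq: "gap_code S n = gap_code S' n"
  then have S: "S \<subseteq> {1..n}" "1 \<in> S" and S': "S' \<subseteq> {1..n}" "1 \<in> S'"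
    by auto
  have "boundaries S n = boundaries S' n"
    by (rule gaps_inject[OF sorted_boundaries[OF S(1)] sorted_boundaries[OF S'(1)]
          boundaries_ne boundaries_ne])
      (use S S' eq in \<open>simp_all add: gap_code_def hd_boundaries\<close>)
  then have "sorted_list_of_set S = sorted_list_of_set S'"
    by (simp add: boundaries_def)
  moreover have "finite S" "finite S'"
    using S S' finite_subset by auto
  ultimately show "S = S'"
    by (metis sorted_list_of_set.set_sorted_key_list_of_set)
qed

lemma boundaries_nth:
  assumes "S \<subseteq> {1..n}" "i < card S"
  shows "boundaries S n ! i \<in> S"
proof -
  have "finite S" using assms(1) finite_subset by blast
  with assms(2) have "sorted_list_of_set S ! i \<in> set (sorted_list_of_set S)"
    by (intro nth_mem) simp
  with \<open>finite S\<close> assms(2) show ?thesis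
    by (simp add: boundaries_def nth_append)
qed

lemma floor_in_between_boundaries:
  assumes S: "S \<subseteq> {1..n}" "1 \<in> S" and i: "i < card S"
    and y: "boundaries S n ! i \<le> y" "y < boundaries S n ! Suc i"
  shows "floor_in S y = boundaries S n ! i"
proof -
  let ?xs = "boundaries S n"
  have fin: "finite S" using S(1) finite_subset by blast
  have sorted: "sorted ?xs" and len: "length ?xs = Suc (card S)"
    using sorted_boundaries[OF S(1)] by simp_all
  show ?thesis
  proof (rule floor_in_eqI[OF fin boundaries_nth[OF S(1) i] y(1)])
    fix t assume "t \<in> S" "t \<le> y"
    with fin obtain j where "j < length (sorted_list_of_set S)" "t = sorted_list_of_set S ! j"
      by (metis in_set_conv_nth set_sorted_list_of_set)
    then have j: "j < card S" "t = ?xs ! j"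
      by (simp_all add: boundaries_def nth_append)
    have "j \<le> i"
    proof (rule ccontr)
      assume "\<not> j \<le> i"
      then have "?xs ! Suc i \<le> ?xs ! j"
        using j len by (intro sorted_nth_mono[OF sorted]) auto
      with j y \<open>t \<le> y\<close> show False by simp
    qed
    with i len sorted j show "t \<le> ?xs ! i"
      by (simp add: sorted_nth_mono)
  qed
qed

lemma gap_interval_subset_homog_block:
  assumes G: "ograph n E" and "1 \<le> n" and i: "i < card (block_starts n E)"
    and B: "B \<in> homog_blocks n E" "Min B = boundaries (block_starts n E) n ! i"
  shows "{boundaries (block_starts n E) n ! i..<boundaries (block_starts n E) n ! Suc i} \<subseteq> B"
proof
  let ?S = "block_starts n E" let ?xs = "boundaries ?S n"
  note S = block_starts_subset[of n E] one_in_block_starts[OF \<open>1 \<le> n\<close>]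
  fix y assume y: "y \<in> {?xs ! i..<?xs ! Suc i}"
  have "?xs ! Suc i \<le> Suc n"
  proof (cases "Suc i < card ?S")
    case True
    with boundaries_nth[OF S(1) True] S(1) show ?thesis by auto
  next
    case False
    with i show ?thesis by (simp add: boundaries_def nth_append)
  qed
  moreover have "1 \<le> ?xs ! i"
    using boundaries_nth[OF S(1) i] S(1) by auto
  ultimately have "y \<in> {1..n}" using y by auto
  then obtain B' where B': "B' \<in> homog_blocks n E" "y \<in> B'"
    by (rule exists_homog_block)
  have "Min B' = Min B"
    using floor_in_block_starts[OF G B'] floor_in_between_boundaries[OF S i] y B(2) by simp
  with G B' B(1) have "B' = B"
    by (metis inj_on_Min_homog_blocks inj_onD)
  with B' show "y \<in> B" by simp
qed

lemma length_filter_gap_code_le: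
  assumes G: "ograph n E" and "1 \<le> n"
  shows "length (filter (\<lambda>x. M < x) (gap_code (block_starts n E) n))
           \<le> card {B \<in> homog_blocks n E. M < card B}"
proof -
  let ?S = "block_starts n E" let ?xs = "boundaries ?S n" let ?g = "gap_code ?S n"
  let ?I = "{i. i < length ?g \<and> M < ?g ! i}"
  let ?large = "{B \<in> homog_blocks n E. M < card B}"
  note S = block_starts_subset[of n E] one_in_block_starts[OF \<open>1 \<le> n\<close>]
  have len: "length ?g = card ?S" "length ?xs = Suc (card ?S)"
    by (simp_all add: length_gap_code)
  have "inj_on ((!) ?xs) ?I"
    using strict_sorted_boundaries[OF S(1)] len by (intro inj_on_nth) (auto simp: strict_sorted_iff)
  moreover have "(!) ?xs ` ?I \<subseteq> Min ` ?large"
  proof (rule image_subsetI)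
    fix i assume "i \<in> ?I"
    then have i: "i < card ?S" and large: "M < ?g ! i"
      using len by auto
    obtain B where B: "B \<in> homog_blocks n E" "Min B = ?xs ! i"
      using boundaries_nth[OF S(1) i] by (auto simp: block_starts_def)
    have "?g ! i = card {?xs ! i..<?xs ! Suc i}"
      using i len by (simp add: gap_code_def nth_gaps)
    also have "\<dots> \<le> card B"
      using gap_interval_subset_homog_block[OF G \<open>1 \<le> n\<close> i B]
      by (intro card_mono) (auto intro: finite_subset[OF homog_block_subset[OF B(1)]])
    finally have "B \<in> ?large" using B(1) large by simp
    with B(2) show "?xs ! i \<in> Min ` ?large" by (metis imageI)
  qed
  ultimately have "card ?I \<le> card (Min ` ?large)"
    by (intro card_inj_on_le) (simp_all add: finite_homog_blocks)
  also have "\<dots> \<le> card ?large"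
    by (intro card_image_le) (simp add: finite_homog_blocks)
  finally show ?thesis
    by (simp add: length_filter_conv_card)
qed

lemma mset_block_seq: "mset (block_seq n E) = image_mset card (mset_set (homog_blocks n E))"
  by (simp add: block_seq_def)

lemma length_block_seq: "length (block_seq n E) = card (homog_blocks n E)"
  by (metis mset_block_seq size_image_mset size_mset size_mset_set)

lemma length_filter_block_seq:
  "length (filter p (block_seq n E)) = card {B \<in> homog_blocks n E. p (card B)}"
proof -
  have "length (filter p (block_seq n E)) = size (filter_mset p (mset (block_seq n E)))"
    by (metis mset_filter size_mset)
  also have "\<dots> = size (filter_mset (\<lambda>B. p (card B)) (mset_set (homog_blocks n E)))"
    by (simp add: mset_block_seq filter_mset_image_mset)
  also have "\<dots> = card {B \<in> homog_blocks n E. p (card B)}"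
    by (simp add: finite_homog_blocks)
  finally show ?thesis .
qed

lemma block_seq_pos: "x \<in> set (block_seq n E) \<Longrightarrow> 0 < x"
proof -
  assume "x \<in> set (block_seq n E)"
  then have "x \<in># image_mset card (mset_set (homog_blocks n E))"
    by (metis mset_block_seq set_mset_mset)
  then obtain B where "B \<in> homog_blocks n E" "x = card B"
    using finite_homog_blocks by auto
  then show "0 < x"
    by (auto elim: homog_block_interval)
qed

lemma length_le_sum_list: "\<forall>x \<in> set xs. 0 < x \<Longrightarrow> length xs \<le> sum_list (xs :: nat list)"
  by (induction xs) (auto simp: Suc_le_eq)

lemma length_le_if_sum_list_drop_le:
  fixes xs :: "nat list"
  assumes "\<And>x. x \<in> set xs \<Longrightarrow> 0 < x" "sum_list (drop j xs) \<le> M"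
  shows "length xs \<le> j + M"
proof -
  have "length (drop j xs) \<le> sum_list (drop j xs)"
    using assms(1) by (intro length_le_sum_list) (auto dest: in_set_dropD)
  with assms(2) show ?thesis by simp
qed

lemma length_filter_greater_le_if_sum_list_drop_le:
  fixes xs :: "nat list"
  assumes "sum_list (drop j xs) \<le> M"
  shows "length (filter (\<lambda>x. M < x) xs) \<le> j"
proof -
  have "filter (\<lambda>x. M < x) (drop j xs) = []"
    using assms member_le_sum_list[of _ "drop j xs"] by (fastforce simp: filter_empty_conv)
  then have "filter (\<lambda>x. M < x) xs = filter (\<lambda>x. M < x) (take j xs)"
    by (metis append_Nil2 append_take_drop_id filter_append)
  then show ?thesis
    by (metis length_filter_le length_take min.bounded_iff order_trans order_refl)
qed

definition admissible_starts :: "nat \<Rightarrow> nat \<Rightarrow> nat \<Rightarrow> nat \<Rightarrow> nat set set" where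
  "admissible_starts L M k n =
     {S. S \<subseteq> {1..n} \<and> 1 \<in> S \<and> gap_code S n \<in> few_large_comps L M k n}"

lemma finite_admissible_starts: "finite (admissible_starts L M k n)"
  by (rule finite_subset[of _ "Pow {1..n}"]) (auto simp: admissible_starts_def)

lemma card_admissible_starts: "card (admissible_starts L M k n) \<le> card (few_large_comps L M k n)"
proof (rule card_inj_on_le[OF _ _ finite_few_large_comps])
  show "inj_on (\<lambda>S. gap_code S n) (admissible_starts L M k n)"
    by (rule inj_on_subset[OF inj_on_gap_code]) (auto simp: admissible_starts_def)
qed (auto simp: admissible_starts_def)

lemma card_admissible_start_le:
  "S \<in> admissible_starts L M k n \<Longrightarrow> card S \<le> L"
  by (auto simp: admissible_starts_def few_large_comps_def length_gap_code)

lemma card_Sigma_Pow_le: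
  assumes "finite F" "\<And>S. S \<in> F \<Longrightarrow> finite S" "\<And>S. S \<in> F \<Longrightarrow> card S \<le> L"
  shows "card (SIGMA S:F. Pow (S \<times> S)) \<le> card F * 2 ^ (L * L)"
proof -
  have "card (SIGMA S:F. Pow (S \<times> S)) = (\<Sum>S\<in>F. card (Pow (S \<times> S)))"
    using assms by (intro card_SigmaI) auto
  also have "\<dots> \<le> (\<Sum>S\<in>F. 2 ^ (L * L))"
  proof (rule sum_mono)
    fix S assume "S \<in> F"
    with assms have "card (Pow (S \<times> S)) = 2 ^ (card S * card S)"
      by (simp add: card_Pow card_cartesian_product)
    also have "\<dots> \<le> 2 ^ (L * L)"
      using assms(3)[OF \<open>S \<in> F\<close>] by (intro power_increasing mult_le_mono) auto
    finally show "card (Pow (S \<times> S)) \<le> 2 ^ (L * L)" .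
  qed
  finally show ?thesis by simp
qed

lemma block_starts_admissible:
  assumes G: "ograph n E" and "1 \<le> n" and hyp: "sum_list (drop (k + 1) (block_seq n E)) \<le> M"
  shows "block_starts n E \<in> admissible_starts (k + 1 + M) M k n"
proof -
  note S = block_starts_subset[of n E] one_in_block_starts[OF \<open>1 \<le> n\<close>]
  have "length (gap_code (block_starts n E) n) \<le> k + 1 + M"
    using length_le_if_sum_list_drop_le[OF block_seq_pos hyp]
    by (simp add: length_gap_code card_block_starts[OF G] length_block_seq)
  moreover have "length (filter (\<lambda>x. M < x) (gap_code (block_starts n E) n)) \<le> k + 1"
    using length_filter_gap_code_le[OF G \<open>1 \<le> n\<close>, of M]
      length_filter_greater_le_if_sum_list_drop_le[OF hyp]
    by (simp add: length_filter_block_seq)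
  ultimately show ?thesis
    using S sum_list_gap_code[OF S] by (simp add: admissible_starts_def few_large_comps_def)
qed

lemma card_members_le:
  fixes P :: "(nat \<times> (nat \<times> nat) set) set" and k M n :: nat
  defines "L \<equiv> k + 1 + M"
  assumes graphs: "\<forall>(n, E) \<in> P. ograph n E"
    and hyp: "\<forall>(n, E) \<in> P. sum_list (drop (k + 1) (block_seq n E)) \<le> M"
    and "1 \<le> n"
  shows "card (members P n) \<le> (L + 1) * (M + 2) ^ L * ((k + 1) * (n + 1) ^ k) * 2 ^ (L * L)"
proof -
  let ?code = "\<lambda>E. (block_starts n E, quotient_edges n E)"
  let ?T = "SIGMA S:admissible_starts L M k n. Pow (S \<times> S)"
  have G: "ograph n E" and bound: "sum_list (drop (k + 1) (block_seq n E)) \<le> M"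
    if "E \<in> members P n" for E
    using that graphs hyp by (auto simp: members_def)
  have "inj_on ?code (members P n)"
    by (rule inj_onI) (metis G lift_quotient_edges prod.inject)
  moreover have "?code ` members P n \<subseteq> ?T"
  proof (rule image_subsetI)
    fix E assume "E \<in> members P n"
    with G bound \<open>1 \<le> n\<close> show "?code E \<in> ?T"
      unfolding L_def using block_starts_admissible quotient_edges_subset by blast
  qed
  moreover have "finite ?T"
    using finite_admissible_starts
    by (rule finite_SigmaI) (auto simp: admissible_starts_def intro: finite_subset)
  ultimately have "card (members P n) \<le> card ?T"
    by (rule card_inj_on_le)
  also have "\<dots> \<le> card (admissible_starts L M k n) * 2 ^ (L * L)"
    by (rule card_Sigma_Pow_le[OF finite_admissible_starts])
      (auto simp: admissible_starts_def card_admissible_start_le intro: finite_subset)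
  also have "\<dots> \<le> (L + 1) * (M + 2) ^ L * ((k + 1) * (n + 1) ^ k) * 2 ^ (L * L)"
    using card_admissible_starts card_few_large_comps order_trans by (intro mult_le_mono1) blast
  finally show ?thesis .
qed

theorem lemma8:
  fixes P :: "(nat \<times> (nat \<times> nat) set) set" and k M :: nat
  assumes "hereditary P"
    and "\<forall>(n, E) \<in> P. sum_list (drop (k + 1) (block_seq n E)) \<le> M"
  shows "(\<lambda>n. real (card (members P n))) \<in> O(\<lambda>n. real n ^ k)"
proof -
  define L where "L = k + 1 + M"
  define C where "C = (L + 1) * (M + 2) ^ L * (k + 1) * 2 ^ (L * L) * 2 ^ k"
  have graphs: "\<forall>(n, E) \<in> P. ograph n E"
    using \<open>hereditary P\<close> by (simp add: hereditary_def)
  have "eventually (\<lambda>n. norm (real (card (members P n))) \<le> real C * norm (real n ^ k)) at_top"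
    using eventually_ge_at_top[of "1::nat"]
  proof eventually_elim
    case (elim n)
    have "card (members P n) \<le> (L + 1) * (M + 2) ^ L * ((k + 1) * (n + 1) ^ k) * 2 ^ (L * L)"
      using card_members_le[OF graphs assms(2) elim] by (simp add: L_def)
    also have "\<dots> \<le> (L + 1) * (M + 2) ^ L * ((k + 1) * (2 * n) ^ k) * 2 ^ (L * L)"
      using elim by (intro mult_le_mono power_mono) auto
    also have "\<dots> = C * n ^ k"
      by (simp add: C_def power_mult_distrib algebra_simps)
    finally show ?case by (simp flip: of_nat_power of_nat_mult)
  qed
  then show ?thesis by (rule bigoI)
qed

end
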